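(* In the M/G/1 queue with $(\beta,\alpha)$-bounded size estimates, $$\mathbb{E}[T^{\mathrm{res}}_{\mathrm{SRPT\text{-}B}}]\le\mathbb{E}[T^{\mathrm{res}}_{\mathrm{SRPT\text{-}SE}}]+\min\Big\{1,\max\Big\{1-\frac1\alpha,\frac1\beta-1\Big\}\Big\}\Big(\frac1\rho\ln\frac1{1-\rho}-1\Big)\mathbb{E}[S].$$
   Context: Model (M/G/1 with job size estimates). Jobs arrive to a single preemptive server (rate 1) as a Poisson process of rate $\lambda>0$; each job has a true size and an estimated size, the pairs being i.i.d. copies of $(S,Z)$ with a joint density; $0<\rho=\lambda\mathbb{E}[S]<1$. Estimates are $(\beta,\alpha)$-bounded ($0<\beta\le\alpha$) if $\beta S\le Z\le\alpha S$ a.s. Policies are given by rank functions on job states $(s,z,a)$ ($a$ = age = service received), always serving the least-rank job: SRPT-B: $\min\{|z-a|,z\}$; SRPT-SE: $\frac{z}{s}(s-a)$. The residence time of a job is the time from its first receiving service to its completion; $T^{\mathrm{res}}_\pi$ is the steady-state residence time under $\pi$. Known fact (cited, may be used): with $\rho_Z(x)=\lambda\mathbb{E}[S\mathbf 1(Z\le x)]$ and $w_\pi(s,z,a)=\sup_{b\in[a,s)}r_\pi(s,z,b)$, the expected residence time of a tagged job with $S=s,Z=z$ is $\int_0^s\frac{da}{1-\rho_Z(w_\pi(s,z,a))}$ for these policies and for PSJF-E (rank $z$). *)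

theory Defs
  imports "HOL-Analysis.Analysis"
begin

text \<open>The joint law of (S, Z) is a measure M on real \<times> real (first component: true
size s, second component: estimate z).  Job states are (s, z, a).\<close>

definition rank_SRPT_B :: "real \<Rightarrow> real \<Rightarrow> real \<Rightarrow> real" where
  "rank_SRPT_B s z a = min \<bar>z - a\<bar> z"

definition rank_SRPT_SE :: "real \<Rightarrow> real \<Rightarrow> real \<Rightarrow> real" where
  "rank_SRPT_SE s z a = z / s * (s - a)"

definition rhoZ :: "real \<Rightarrow> (real \<times> real) measure \<Rightarrow> real \<Rightarrow> real" where
  "rhoZ lam M x = lam * (\<integral> p. fst p * indicator {p. snd p \<le> x} p \<partial>M)"

definition worst_rank :: "(real \<Rightarrow> real \<Rightarrow> real \<Rightarrow> real) \<Rightarrow> real \<Rightarrow> real \<Rightarrow> real \<Rightarrow> real" where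
  "worst_rank r s z a = (SUP b \<in> {a..<s}. r s z b)"

text \<open>Expected residence time of a tagged job with S = s, Z = z (cited formula).\<close>
definition cond_res_time ::
  "(real \<Rightarrow> real \<Rightarrow> real \<Rightarrow> real) \<Rightarrow> real \<Rightarrow> (real \<times> real) measure \<Rightarrow> real \<Rightarrow> real \<Rightarrow> ennreal" where
  "cond_res_time r lam M s z =
     (\<integral>\<^sup>+ a \<in> {0..<s}. ennreal (1 / (1 - rhoZ lam M (worst_rank r s z a))) \<partial>lborel)"

definition mean_res_time ::
  "(real \<Rightarrow> real \<Rightarrow> real \<Rightarrow> real) \<Rightarrow> real \<Rightarrow> (real \<times> real) measure \<Rightarrow> ennreal" where
  "mean_res_time r lam M = (\<integral>\<^sup>+ p. cond_res_time r lam M (fst p) (snd p) \<partial>M)"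

end

theory Submission
  imports Defs
begin

text \<open>Both mean residence times are E of the integral over a in [0, S) of R(w(S, Z, a)), with the
  common nondecreasing slowdown R(x) = 1 / (1 - rho_Z(x)) \<ge> 1. For SRPT-SE the worst future rank is
  z (s - a) / s, so the inner integral is (s / z) times the integral of R(z - x) over [0, z). For
  SRPT-B the worst future rank is at most z - a while the estimate lasts and at most s - z after;
  comparing the two integrals in the regimes s \<le> z, z < s \<le> 2 z and 2 z < s bounds the excess of
  a job by min 1 (|s - z| / z) * s (R(z) - 1), and bounded estimates make the coefficient at most
  min 1 (max (1 - 1 / alpha) (1 / beta - 1)). Finally lambda E[S (R(Z) - 1)] \<le> ln (1 / (1 - rho)) - rho:
  rho_Z is continuous, so the lambda S-weighted mass of the jobs with rho_Z(Z) > t is at most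
  rho - t, and integrating this against (1 - t)^-2 (layer cake) yields the logarithm.\<close>

text \<open>Integrate the simple functions below A + B after subtracting B.\<close>
lemma nn_integral_add_le:
  fixes A B :: "'a \<Rightarrow> ennreal"
  assumes B[measurable]: "B \<in> borel_measurable M"
  shows "(\<integral>\<^sup>+x. A x + B x \<partial>M) \<le> (\<integral>\<^sup>+x. A x \<partial>M) + (\<integral>\<^sup>+x. B x \<partial>M)"
proof -
  have "integral\<^sup>S M g \<le> (\<integral>\<^sup>+x. A x \<partial>M) + (\<integral>\<^sup>+x. B x \<partial>M)"
    if g: "simple_function M g" "g \<le> (\<lambda>x. A x + B x)" for g
  proof -
    have [measurable]: "g \<in> borel_measurable M" using g borel_measurable_simple_function by auto
    define h where "h x = (if B x = top then 0 else g x - B x)" for x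
    have [measurable]: "h \<in> borel_measurable M" unfolding h_def by measurable
    have "integral\<^sup>S M g = (\<integral>\<^sup>+x. g x \<partial>M)" using nn_integral_eq_simple_integral[OF g(1)] by simp
    also have "\<dots> \<le> (\<integral>\<^sup>+x. h x + B x \<partial>M)"
      by (rule nn_integral_mono) (auto simp: h_def diff_add_self_ennreal)
    also have "\<dots> = (\<integral>\<^sup>+x. h x \<partial>M) + (\<integral>\<^sup>+x. B x \<partial>M)"
      by (rule nn_integral_add) auto
    also have "\<dots> \<le> (\<integral>\<^sup>+x. A x \<partial>M) + (\<integral>\<^sup>+x. B x \<partial>M)"
    proof (intro add_right_mono nn_integral_mono)
      fix x
      have "g x \<le> A x + B x" using g(2) by (auto simp: le_fun_def)
      then show "h x \<le> A x" by (auto simp: h_def ennreal_minus_le_iff add.commute)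
    qed
    finally show ?thesis .
  qed
  then show ?thesis unfolding nn_integral_def[of M "\<lambda>x. A x + B x"] by (intro SUP_least) auto
qed

lemma nn_integral_FTC_Ico:
  fixes f F :: "real \<Rightarrow> real"
  assumes [measurable]: "f \<in> borel_measurable borel"
    and "\<And>x. x \<in> {a..b} \<Longrightarrow> DERIV F x :> f x" "\<And>x. x \<in> {a..b} \<Longrightarrow> 0 \<le> f x" "a \<le> b"
  shows "(\<integral>\<^sup>+ x. ennreal (indicator {a..<b} x * f x) \<partial>lborel) = ennreal (F b - F a)"
proof -
  have "(\<integral>\<^sup>+ x. ennreal (indicator {a..<b} x * f x) \<partial>lborel)
      = (\<integral>\<^sup>+ x. ennreal (f x) * indicator {a..b} x \<partial>lborel)"
    by (rule nn_integral_cong_AE)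
       (use AE_lborel_singleton[of b] in \<open>auto elim!: eventually_mono split: split_indicator\<close>)
  also have "\<dots> = ennreal (F b - F a)"
    using nn_integral_FTC_Icc[of f a b F] assms by simp
  finally show ?thesis .
qed

lemma excess_eq_nn_integral:
  fixes c u :: real
  assumes "0 \<le> c" "0 \<le> u" "u < 1"
  shows "ennreal (c * (1 / (1 - u) - 1)) = (\<integral>\<^sup>+ t. ennreal (indicator {0..<u} t * (c / (1 - t)\<^sup>2)) \<partial>lborel)"
proof -
  have "(\<integral>\<^sup>+ t. ennreal (indicator {0..<u} t * (c / (1 - t)\<^sup>2)) \<partial>lborel)
      = ennreal (c * u / (1 - u) - c * 0 / (1 - 0))"
  proof (rule nn_integral_FTC_Ico)
    fix x :: real assume "x \<in> {0..u}"
    then have "x \<noteq> 1" using assms by auto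
    then show "((\<lambda>t. c * t / (1 - t)) has_real_derivative c / (1 - x)\<^sup>2) (at x)"
      by (auto intro!: derivative_eq_intros simp: field_simps power2_eq_square)
  qed (use assms in auto)
  also have "c * u / (1 - u) - c * 0 / (1 - 0) = c * (1 / (1 - u) - 1)"
    using assms by (simp add: field_simps)
  finally show ?thesis ..
qed

lemma nn_integral_tail_weight:
  fixes r :: real
  assumes r: "0 \<le> r" "r < 1"
  shows "(\<integral>\<^sup>+ t. ennreal (indicator {0..<r} t * ((r - t) / (1 - t)\<^sup>2)) \<partial>lborel)
    = ennreal (ln (1 / (1 - r)) - r)"
proof -
  define G where "G t = - ln (1 - t) - (1 - r) / (1 - t)" for t
  have "(\<integral>\<^sup>+ t. ennreal (indicator {0..<r} t * ((r - t) / (1 - t)\<^sup>2)) \<partial>lborel) = ennreal (G r - G 0)"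
  proof (rule nn_integral_FTC_Ico)
    fix x :: real assume "x \<in> {0..r}"
    then have x: "x < 1" using r by auto
    have "((\<lambda>t. - ln (1 - t)) has_real_derivative 1 / (1 - x)) (at x)"
      using x by (auto intro!: derivative_eq_intros)
    moreover have "((\<lambda>t. (1 - r) / (1 - t)) has_real_derivative (1 - r) / (1 - x)\<^sup>2) (at x)"
      using x by (auto intro!: derivative_eq_intros simp: power2_eq_square)
    ultimately have "(G has_real_derivative 1 / (1 - x) - (1 - r) / (1 - x)\<^sup>2) (at x)"
      unfolding G_def by (rule DERIV_diff)
    also have "1 / (1 - x) - (1 - r) / (1 - x)\<^sup>2 = (r - x) / (1 - x)\<^sup>2"
    proof -
      have "1 / y - (1 - r) / y\<^sup>2 = (r - (1 - y)) / y\<^sup>2" if "y \<noteq> 0" for y :: real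
        using that by (simp add: field_simps power2_eq_square)
      then show ?thesis using x by simp
    qed
    finally show "(G has_real_derivative (r - x) / (1 - x)\<^sup>2) (at x)" .
  qed (use r in auto)
  also have "G r - G 0 = ln (1 / (1 - r)) - r"
    using r by (simp add: G_def ln_div field_simps)
  finally show ?thesis .
qed

lemma density_AE_snd_neq:
  fixes g :: "real \<times> real \<Rightarrow> ennreal"
  assumes "g \<in> borel_measurable borel"
  shows "AE p in density lborel g. snd p \<noteq> x"
proof -
  have "AE p in (lborel \<Otimes>\<^sub>M lborel :: (real \<times> real) measure). snd p \<noteq> x"
  proof (subst lborel_pair.AE_pair_iff[symmetric])
    show "{p \<in> space (lborel \<Otimes>\<^sub>M lborel). snd p \<noteq> x} \<in> sets (lborel \<Otimes>\<^sub>M (lborel :: real measure))"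
      by measurable
    show "AE a in lborel. AE b in lborel. b \<noteq> x"
      using AE_lborel_singleton[of x] by simp
  qed
  then have "AE p in (lborel :: (real \<times> real) measure). snd p \<noteq> x"
    by (subst (asm) lborel_prod)
  then show ?thesis using assms by (subst AE_density) (auto elim!: eventually_mono)
qed

definition res_integral ::
  "(real \<Rightarrow> real \<Rightarrow> real \<Rightarrow> real) \<Rightarrow> (real \<Rightarrow> real) \<Rightarrow> real \<Rightarrow> real \<Rightarrow> ennreal" where
  "res_integral r R s z = (\<integral>\<^sup>+ a\<in>{0..<s}. ennreal (R (worst_rank r s z a)) \<partial>lborel)"

lemma cond_res_time_eq_res_integral:
  "cond_res_time r lam M s z = res_integral r (\<lambda>x. 1 / (1 - rhoZ lam M x)) s z"
  by (simp add: cond_res_time_def res_integral_def)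

definition remaining_integral :: "(real \<Rightarrow> real) \<Rightarrow> real \<Rightarrow> real" where
  "remaining_integral R z = (\<integral>x. indicator {0..<z} x * R (z - x) \<partial>lborel)"

lemma worst_rank_SRPT_SE:
  assumes "0 < s" "a < s" "0 \<le> z"
  shows "worst_rank rank_SRPT_SE s z a = z / s * (s - a)"
  unfolding worst_rank_def rank_SRPT_SE_def
proof (rule cSup_eq_maximum)
  show "z / s * (s - a) \<in> (\<lambda>b. z / s * (s - b)) ` {a..<s}" using assms by auto
  fix x assume "x \<in> (\<lambda>b. z / s * (s - b)) ` {a..<s}"
  then obtain b where "a \<le> b" "x = z / s * (s - b)" by auto
  then show "x \<le> z / s * (s - a)"
    using assms by (simp, intro divide_right_mono mult_left_mono) auto
qed

lemma worst_rank_SRPT_B_le: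
  assumes "a < s" "\<And>b. a \<le> b \<Longrightarrow> b < s \<Longrightarrow> min \<bar>z - b\<bar> z \<le> u"
  shows "worst_rank rank_SRPT_B s z a \<le> u"
  unfolding worst_rank_def rank_SRPT_B_def using assms by (intro cSUP_least) auto

lemma res_integral_le_integral:
  assumes G: "integrable lborel G" "\<And>a. 0 \<le> G a"
    and dom: "\<And>a. 0 \<le> a \<Longrightarrow> a < s \<Longrightarrow> R (worst_rank r s z a) \<le> G a"
  shows "res_integral r R s z \<le> ennreal (\<integral>a. G a \<partial>lborel)"
proof -
  have "res_integral r R s z \<le> (\<integral>\<^sup>+ a. ennreal (G a) \<partial>lborel)"
    unfolding res_integral_def
    by (rule nn_integral_mono) (auto intro!: ennreal_leI dom simp: G split: split_indicator)
  also have "\<dots> = ennreal (\<integral>a. G a \<partial>lborel)"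
    using G by (intro nn_integral_eq_integral) auto
  finally show ?thesis .
qed

context
  fixes R :: "real \<Rightarrow> real"
  assumes R_mono: "mono R" and R_ge_1: "\<And>x. 1 \<le> R x"
begin

private lemma R_le: "x \<le> y \<Longrightarrow> R x \<le> R y"
  using R_mono by (auto simp: mono_def)

private lemma R_nonneg: "0 \<le> R x"
  using R_ge_1[of x] by linarith

private lemma R_measurable [measurable]: "R \<in> borel_measurable borel"
  using borel_measurable_mono R_mono by blast

lemma integrable_indicator_times_mono:
  fixes g :: "real \<Rightarrow> real"
  assumes [measurable]: "g \<in> borel_measurable borel" and bound: "\<And>x. x \<in> {a..<b} \<Longrightarrow> g x \<le> c"
  shows "integrable lborel (\<lambda>x. indicator {a..<b} x * R (g x))"
proof -
  have "emeasure lborel {a..<b} \<le> emeasure lborel {a..b}"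
    by (rule emeasure_mono) auto
  also have "\<dots> < \<infinity>" by (simp add: emeasure_lborel_Icc_eq)
  finally
  show ?thesis
    using integrableI_bounded_set_indicator[of "{a..<b}" lborel "\<lambda>x. R (g x)" "R c"]
    by (simp add: bound R_le R_nonneg)
qed

lemma integrable_remaining: "integrable lborel (\<lambda>x. indicator {0..<z} x * R (z - x))"
  by (rule integrable_indicator_times_mono[where c = z]) auto

lemma remaining_integral_nonneg: "0 \<le> remaining_integral R z"
  unfolding remaining_integral_def by (rule integral_nonneg_AE) (simp add: R_nonneg)

text \<open>On [d, z] the slowdown is at least R d, and it is at least 1 everywhere.\<close>
lemma remaining_integral_ge:
  assumes "0 \<le> d" "d \<le> z"
  shows "z + (z - d) * (R d - 1) \<le> remaining_integral R z"
proof -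
  have "z + (z - d) * (R d - 1)
      = (\<integral>x. indicator {0..<z} x + indicator {0..<z-d} x * (R d - 1) \<partial>lborel)"
    using assms by (subst Bochner_Integration.integral_add) (auto simp: integrable_indicator_iff)
  also have "\<dots> \<le> remaining_integral R z"
    unfolding remaining_integral_def
  proof (rule Bochner_Integration.integral_mono)
    show "integrable lborel (\<lambda>x. indicator {0..<z} x + indicator {0..<z-d} x * (R d - 1))"
      using assms by (intro Bochner_Integration.integrable_add) (auto simp: integrable_indicator_iff)
  qed (use integrable_remaining assms R_ge_1 in \<open>auto simp: indicator_def intro: R_le\<close>)
  finally show ?thesis .
qed

lemma res_integral_SRPT_SE:
  assumes s: "0 < s" and z: "0 < z"
  shows "res_integral rank_SRPT_SE R s z = ennreal (s / z * remaining_integral R z)"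
proof -
  have "res_integral rank_SRPT_SE R s z
      = (\<integral>\<^sup>+ a. ennreal (indicator {0..<s} a * R (z / s * (s - a))) \<partial>lborel)"
    unfolding res_integral_def
    by (rule nn_integral_cong) (use s z in \<open>auto simp: worst_rank_SRPT_SE split: split_indicator\<close>)
  also have "\<dots> = ennreal (\<integral>a. indicator {0..<s} a * R (z / s * (s - a)) \<partial>lborel)"
    using s z
    by (intro nn_integral_eq_integral integrable_indicator_times_mono[where c = z])
       (auto simp: R_nonneg field_simps)
  also have "(\<integral>a. indicator {0..<s} a * R (z / s * (s - a)) \<partial>lborel)
      = s / z * (\<integral>x. indicator {0..<s} (0 + s / z * x) * R (z / s * (s - (0 + s / z * x))) \<partial>lborel)"
    using z s by (subst lborel_integral_real_affine[where c = "s / z" and t = 0]) auto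
  also have "(\<lambda>x. indicator {0..<s} (0 + s / z * x) * R (z / s * (s - (0 + s / z * x))))
      = (\<lambda>x. indicator {0..<z} x * R (z - x))"
  proof
    fix x
    have "0 + s / z * x \<in> {0..<s} \<longleftrightarrow> x \<in> {0..<z}"
      using s z by (auto simp: field_simps zero_le_mult_iff)
    moreover have "z / s * (s - (0 + s / z * x)) = z - x" using s z by (simp add: field_simps)
    ultimately show "indicator {0..<s} (0 + s / z * x) * R (z / s * (s - (0 + s / z * x)))
        = indicator {0..<z} x * R (z - x)"
      by (simp add: indicator_def)
  qed
  finally show ?thesis by (simp add: remaining_integral_def)
qed

lemma res_integral_SRPT_B_crude:
  assumes s: "0 < s" and z: "0 < z"
  shows "res_integral rank_SRPT_B R s z \<le> ennreal (s / z * remaining_integral R z + s * (R z - 1))"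
proof -
  have "res_integral rank_SRPT_B R s z \<le> ennreal (\<integral>a. indicator {0..<s} a * R z \<partial>lborel)"
  proof (rule res_integral_le_integral)
    fix a assume "0 \<le> a" "a < s"
    moreover from this have "worst_rank rank_SRPT_B s z a \<le> z"
      by (intro worst_rank_SRPT_B_le) auto
    ultimately show "R (worst_rank rank_SRPT_B s z a) \<le> indicator {0..<s} a * R z"
      by (simp add: R_le)
  qed (use s in \<open>simp_all add: R_nonneg\<close>)
  also have "(\<integral>a. indicator {0..<s} a * R z \<partial>lborel) \<le> s / z * remaining_integral R z + s * (R z - 1)"
  proof -
    have "s \<le> s / z * remaining_integral R z"
      using remaining_integral_ge[of z z] s z by (simp add: field_simps)
    then show ?thesis using s by (simp add: algebra_simps)
  qed
  finally show ?thesis by (simp add: ennreal_leI)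
qed

lemma remaining_integral_ge_partial:
  assumes "0 \<le> s" "s \<le> z"
  shows "(\<integral>a. indicator {0..<s} a * R (z - a) \<partial>lborel) + (z - s) \<le> remaining_integral R z"
proof -
  have int: "integrable lborel (\<lambda>a. indicator {0..<s} a * R (z - a))"
    by (rule integrable_indicator_times_mono[where c = z]) (use assms in auto)
  have "(\<integral>a. indicator {0..<s} a * R (z - a) \<partial>lborel) + (z - s)
      = (\<integral>a. indicator {0..<s} a * R (z - a) + indicator {s..<z} a \<partial>lborel)"
    using assms by (subst Bochner_Integration.integral_add) (auto simp: integrable_indicator_iff int)
  also have "\<dots> \<le> remaining_integral R z"
    unfolding remaining_integral_def
  proof (rule Bochner_Integration.integral_mono)
    show "integrable lborel (\<lambda>a. indicator {0..<s} a * R (z - a) + indicator {s..<z} a)"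
      using assms by (intro Bochner_Integration.integrable_add int) (auto simp: integrable_indicator_iff)
  qed (use integrable_remaining assms R_ge_1 R_nonneg in \<open>auto simp: indicator_def\<close>)
  finally show ?thesis .
qed

lemma res_integral_SRPT_B_overestimated:
  assumes s: "0 < s" "s \<le> z"
  shows "res_integral rank_SRPT_B R s z
    \<le> ennreal (s / z * remaining_integral R z + (1 - s / z) * (s * (R z - 1)))"
proof -
  define J where "J = (\<integral>a. indicator {0..<s} a * R (z - a) \<partial>lborel)"
  have J_int: "integrable lborel (\<lambda>a. indicator {0..<s} a * R (z - a))"
    by (rule integrable_indicator_times_mono[where c = z]) (use s in auto)
  have "res_integral rank_SRPT_B R s z \<le> ennreal J"
    unfolding J_def
  proof (rule res_integral_le_integral[OF J_int])
    fix a assume a: "0 \<le> a" "a < s"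
    have "worst_rank rank_SRPT_B s z a \<le> z - a"
      by (rule worst_rank_SRPT_B_le) (use a s in auto)
    then show "R (worst_rank rank_SRPT_B s z a) \<le> indicator {0..<s} a * R (z - a)"
      using a by (simp add: R_le)
  qed (simp add: R_nonneg)
  moreover have "J \<le> s / z * remaining_integral R z + (1 - s / z) * (s * (R z - 1))"
  proof -
    have "J \<le> (\<integral>a. indicator {0..<s} a * R z \<partial>lborel)"
      unfolding J_def
    proof (rule Bochner_Integration.integral_mono)
      show "integrable lborel (\<lambda>a. indicator {0..<s} a * R z)"
        using s by (simp add: integrable_indicator_iff)
    qed (use J_int s in \<open>auto simp: indicator_def R_le\<close>)
    then have J_le: "J \<le> s * R z" using s by simp
    have q: "0 \<le> s / z" "0 \<le> 1 - s / z" using s by (auto simp: field_simps)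
    have "s / z * (J + (z - s)) \<le> s / z * remaining_integral R z"
      using remaining_integral_ge_partial[of s z] s q unfolding J_def by (intro mult_left_mono) auto
    moreover have "(1 - s / z) * J \<le> (1 - s / z) * (s * R z)"
      using J_le q by (intro mult_left_mono) auto
    moreover have "s / z * (J + (z - s)) + (1 - s / z) * (s * (R z - 1))
        = J - (1 - s / z) * J + (1 - s / z) * (s * R z)"
      using s by (simp add: field_simps)
    ultimately show ?thesis by linarith
  qed
  ultimately show ?thesis by (simp add: ennreal_leI order_trans)
qed

lemma res_integral_SRPT_B_underestimated:
  assumes z: "0 < z" and s: "z < s" "s \<le> 2 * z"
  shows "res_integral rank_SRPT_B R s z
    \<le> ennreal (s / z * remaining_integral R z + (s - z) / z * (s * (R z - 1)))"
proof -
  define d where "d = s - z"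
  have d: "0 < d" "d \<le> z" "s = z + d" using s by (auto simp: d_def)
  define G where "G a = indicator {0..<z} a * R (z - a) + indicator {z..<s} a
      + indicator {z-d<..<s} a * (R d - 1)" for a
  have G_int: "integrable lborel G" unfolding G_def using d
    by (intro Bochner_Integration.integrable_add integrable_remaining)
       (auto simp: integrable_indicator_iff)
  have "res_integral rank_SRPT_B R s z \<le> ennreal (\<integral>a. G a \<partial>lborel)"
  proof (rule res_integral_le_integral[OF G_int])
    fix a assume a: "0 \<le> a" "a < s"
    have "worst_rank rank_SRPT_B s z a \<le> max (z - a) d"
      by (rule worst_rank_SRPT_B_le) (use a d in auto)
    then have "R (worst_rank rank_SRPT_B s z a) \<le> R (max (z - a) d)" by (rule R_le)
    also have "\<dots> \<le> G a"
      using a d R_ge_1[of d] R_ge_1[of "z - a"] R_le[of d "z - a"] by (auto simp: G_def indicator_def max_def)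
    finally show "R (worst_rank rank_SRPT_B s z a) \<le> G a" .
  qed (use R_nonneg R_ge_1 in \<open>auto simp: G_def indicator_def\<close>)
  moreover have "(\<integral>a. G a \<partial>lborel) \<le> s / z * remaining_integral R z + (s - z) / z * (s * (R z - 1))"
  proof -
    have G_val: "(\<integral>a. G a \<partial>lborel) = remaining_integral R z + d + (R d - 1) * (2 * d)"
      unfolding G_def remaining_integral_def using d
      by (simp add: Bochner_Integration.integral_add integrable_remaining integrable_indicator_iff
          Bochner_Integration.integrable_add)
    have dz: "0 \<le> d / z" using d z by simp
    have "d / z * (z + (z - d) * (R d - 1)) \<le> d / z * remaining_integral R z"
      using remaining_integral_ge[of d z] d dz by (intro mult_left_mono) auto
    moreover have "d / z * (s * (R d - 1)) \<le> d / z * (s * (R z - 1))"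
      using R_le[of d z] d dz by (intro mult_left_mono) auto
    moreover have "s / z * remaining_integral R z = remaining_integral R z + d / z * remaining_integral R z"
      using d z by (simp add: field_simps)
    moreover have "d / z * (z + (z - d) * (R d - 1)) + d / z * (s * (R d - 1)) = d + (R d - 1) * (2 * d)"
      using d z by (simp add: field_simps)
    ultimately show ?thesis using G_val by (simp add: d_def)
  qed
  ultimately show ?thesis by (simp add: ennreal_leI order_trans)
qed

lemma res_integral_SRPT_B_le_SRPT_SE:
  assumes s: "0 < s" and z: "0 < z"
  shows "res_integral rank_SRPT_B R s z
    \<le> res_integral rank_SRPT_SE R s z + ennreal (min 1 (\<bar>s - z\<bar> / z) * (s * (R z - 1)))"
proof -
  have "res_integral rank_SRPT_B R s z
    \<le> ennreal (s / z * remaining_integral R z + min 1 (\<bar>s - z\<bar> / z) * (s * (R z - 1)))"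
  proof -
    consider "s \<le> z" | "z < s" "s \<le> 2 * z" | "2 * z < s" by linarith
    then show ?thesis
    proof cases
      case 1
      then have "min 1 (\<bar>s - z\<bar> / z) = 1 - s / z" using s z by (simp add: field_simps)
      then show ?thesis using res_integral_SRPT_B_overestimated[OF s 1] by simp
    next
      case 2
      then have "min 1 (\<bar>s - z\<bar> / z) = (s - z) / z" using z by (simp add: field_simps)
      then show ?thesis using res_integral_SRPT_B_underestimated[OF z 2] by simp
    next
      case 3
      then have "min 1 (\<bar>s - z\<bar> / z) = 1" using z by (simp add: field_simps)
      then show ?thesis using res_integral_SRPT_B_crude[OF s z] by simp
    qed
  qed
  also have "\<dots> = res_integral rank_SRPT_SE R s z + ennreal (min 1 (\<bar>s - z\<bar> / z) * (s * (R z - 1)))"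
    using s z R_ge_1[of z] remaining_integral_nonneg[of z]
    by (simp add: res_integral_SRPT_SE ennreal_plus)
  finally show ?thesis .
qed

end

lemma estimate_error_le_bound:
  fixes \<alpha> \<beta> s z :: real
  assumes \<beta>: "0 < \<beta>" and s: "0 < s" and bounded: "\<beta> * s \<le> z" "z \<le> \<alpha> * s"
  shows "min 1 (\<bar>s - z\<bar> / z) \<le> min 1 (max (1 - 1 / \<alpha>) (1 / \<beta> - 1))"
proof -
  have z: "0 < z" using \<beta> s bounded by (meson mult_pos_pos order_less_le_trans)
  then have "0 < \<alpha> * s" using bounded by linarith
  then have \<alpha>: "0 < \<alpha>" using s by (simp add: zero_less_mult_iff)
  show ?thesis
  proof (cases "s \<le> z")
    case True
    have "1 / \<alpha> \<le> s / z" using bounded z \<alpha> s by (simp add: field_simps)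
    then have "\<bar>s - z\<bar> / z \<le> 1 - 1 / \<alpha>" using True z by (simp add: field_simps)
    then show ?thesis by linarith
  next
    case False
    have "s / z \<le> 1 / \<beta>" using bounded z \<beta> s by (simp add: field_simps)
    then have "\<bar>s - z\<bar> / z \<le> 1 / \<beta> - 1" using False z by (simp add: field_simps)
    then show ?thesis by linarith
  qed
qed

lemma estimate_error_bound_nonneg:
  fixes \<alpha> \<beta> :: real
  assumes "0 < \<beta>" "\<beta> \<le> \<alpha>"
  shows "0 \<le> min 1 (max (1 - 1 / \<alpha>) (1 / \<beta> - 1))"
proof (cases "\<beta> \<le> 1")
  case True
  then have "0 \<le> 1 / \<beta> - 1" using assms by (simp add: field_simps)
  then show ?thesis by simp
next
  case False
  then have "0 \<le> 1 - 1 / \<alpha>" using assms by (simp add: field_simps)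
  then show ?thesis by simp
qed

locale job_law =
  fixes M :: "(real \<times> real) measure" and lam ES :: real
  assumes sets_M [measurable_cong]: "sets M = sets (borel :: (real \<times> real) measure)"
    and finite_M: "finite_measure M"
    and integrable_size: "integrable M fst"
    and mean_size: "integral\<^sup>L M fst = ES"
    and positive: "AE p in M. 0 < fst p \<and> 0 < snd p"
    and estimate_no_atoms: "\<And>x. AE p in M. snd p \<noteq> x"
    and lam_pos: "0 < lam" and load_lt_1: "lam * ES < 1"
begin

abbreviation rho :: "real \<Rightarrow> real" where "rho \<equiv> rhoZ lam M"

lemma fst_measurable [measurable]: "fst \<in> borel_measurable M"
  using borel_measurable_continuous_onI[of "fst :: real \<times> real \<Rightarrow> real"]
    measurable_cong_sets[OF sets_M refl, of borel]
  by (simp add: continuous_on_fst)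

lemma snd_measurable [measurable]: "snd \<in> borel_measurable M"
  using borel_measurable_continuous_onI[of "snd :: real \<times> real \<Rightarrow> real"]
    measurable_cong_sets[OF sets_M refl, of borel]
  by (simp add: continuous_on_snd)

lemma estimate_le_measurable [measurable]: "{p. snd p \<le> x} \<in> sets M"
  unfolding sets_M by (intro borel_closed closed_Collect_le continuous_intros)

lemma integrable_size_indicator: "integrable M (\<lambda>p. fst p * indicator {p. snd p \<le> x} p)"
  by (rule integrable_real_mult_indicator[OF estimate_le_measurable integrable_size])

lemma rho_nonneg: "0 \<le> rho x"
  unfolding rhoZ_def using lam_pos
  by (intro mult_nonneg_nonneg integral_nonneg_AE)
     (use positive in \<open>auto elim!: eventually_mono simp: indicator_def\<close>)

lemma rho_mono: "x \<le> y \<Longrightarrow> rho x \<le> rho y"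
  unfolding rhoZ_def using lam_pos
  by (intro mult_left_mono integral_mono_AE integrable_size_indicator)
     (use positive in \<open>auto elim!: eventually_mono simp: indicator_def\<close>)

lemma rho_le_load: "rho x \<le> lam * ES"
  unfolding rhoZ_def mean_size[symmetric] using lam_pos
  by (intro mult_left_mono integral_mono_AE integrable_size_indicator integrable_size)
     (use positive in \<open>auto elim!: eventually_mono simp: indicator_def\<close>)

lemma rho_nonpos:
  assumes "x \<le> 0"
  shows "rho x = 0"
proof -
  have "AE p in M. fst p * indicator {p. snd p \<le> x} p = 0"
    using positive by eventually_elim (use assms in \<open>auto simp: indicator_def\<close>)
  then show ?thesis unfolding rhoZ_def by (simp add: integral_eq_zero_AE)
qed

lemma rho_measurable [measurable]: "rho \<in> borel_measurable borel"
  by (rule borel_measurable_mono) (auto simp: mono_def rho_mono)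

lemma rho_sequentially:
  assumes "\<And>p :: real \<times> real. snd p \<noteq> x
    \<Longrightarrow> (\<lambda>n. indicator {p. snd p \<le> X n} p :: real) \<longlonglongrightarrow> indicator {p. snd p \<le> x} p"
  shows "(\<lambda>n. rho (X n)) \<longlonglongrightarrow> rho x"
  unfolding rhoZ_def
proof (intro tendsto_mult tendsto_const integral_dominated_convergence[where w = fst])
  show "AE p in M. (\<lambda>n. fst p * indicator {p. snd p \<le> X n} p) \<longlonglongrightarrow> fst p * indicator {p. snd p \<le> x} p"
    using estimate_no_atoms[of x] by eventually_elim (use assms in \<open>auto intro: tendsto_mult_left\<close>)
  show "AE p in M. norm (fst p * indicator {p. snd p \<le> X n} p) \<le> fst p" for n
    using positive by eventually_elim (auto simp: indicator_def)
qed (auto simp: integrable_size intro!: borel_measurable_integrable[OF integrable_size_indicator])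

lemma continuous_rho: "continuous_on UNIV rho"
proof -
  have "isCont rho x" for x
  proof (rule continuous_at_sequentiallyI)
    fix X :: "nat \<Rightarrow> real" assume X: "X \<longlonglongrightarrow> x"
    show "(\<lambda>n. rho (X n)) \<longlonglongrightarrow> rho x"
    proof (rule rho_sequentially)
      fix p :: "real \<times> real" assume p: "snd p \<noteq> x"
      have "eventually (\<lambda>n. snd p \<le> X n \<longleftrightarrow> snd p \<le> x) sequentially"
      proof (cases "snd p < x")
        case True
        show ?thesis using order_tendstoD(1)[OF X True] True by (auto elim!: eventually_mono)
      next
        case False
        then have "x < snd p" using p by auto
        show ?thesis using order_tendstoD(2)[OF X \<open>x < snd p\<close>] \<open>x < snd p\<close> by (auto elim!: eventually_mono)
      qed
      then show "(\<lambda>n. indicator {p. snd p \<le> X n} p :: real) \<longlonglongrightarrow> indicator {p. snd p \<le> x} p"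
        by (intro tendsto_eventually) (auto elim!: eventually_mono simp: indicator_def)
    qed
  qed
  then show ?thesis by (simp add: continuous_on_eq_continuous_at)
qed

lemma rho_tendsto_load: "(\<lambda>n. rho (real n)) \<longlonglongrightarrow> lam * ES"
  unfolding rhoZ_def mean_size[symmetric]
proof (intro tendsto_mult tendsto_const integral_dominated_convergence[where w = fst])
  show "AE p in M. (\<lambda>n. fst p * indicator {p. snd p \<le> real n} p) \<longlonglongrightarrow> fst p"
  proof (rule AE_I2)
    fix p :: "real \<times> real"
    obtain N where N: "snd p \<le> real N" using real_arch_simple by blast
    have "eventually (\<lambda>n. fst p * indicator {p. snd p \<le> real n} p = fst p) sequentially"
      unfolding eventually_sequentially by (rule exI[of _ N]) (use N in \<open>auto simp: indicator_def\<close>)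
    then show "(\<lambda>n. fst p * indicator {p. snd p \<le> real n} p) \<longlonglongrightarrow> fst p"
      by (rule tendsto_eventually)
  qed
  show "AE p in M. norm (fst p * indicator {p. snd p \<le> real n} p) \<le> fst p" for n
    using positive by eventually_elim (auto simp: indicator_def)
qed (auto simp: integrable_size intro!: borel_measurable_integrable[OF integrable_size_indicator])

lemma rho_attains:
  assumes t: "0 \<le> t" "t < lam * ES"
  obtains x where "rho x = t"
proof -
  obtain n where n: "t < rho (real n)"
    using order_tendstoD(1)[OF rho_tendsto_load t(2)] by (auto simp: eventually_sequentially)
  have "\<exists>x. 0 \<le> x \<and> x \<le> real n \<and> rho x = t"
    by (rule IVT') (use n t rho_nonpos[of 0] continuous_on_subset[OF continuous_rho] in auto)
  then show ?thesis using that by blast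
qed

text \<open>Continuity gives rho x = t for some x, and rho (snd p) > t forces snd p > x.\<close>
lemma load_above_level:
  assumes t: "0 \<le> t" "t < lam * ES"
  shows "(\<integral>\<^sup>+ p. ennreal (lam * fst p * indicator {p. t < rho (snd p)} p) \<partial>M) \<le> ennreal (lam * ES - t)"
proof -
  obtain x where x: "rho x = t" using rho_attains[OF t] .
  have "(\<integral>\<^sup>+ p. ennreal (lam * fst p * indicator {p. t < rho (snd p)} p) \<partial>M)
      \<le> (\<integral>\<^sup>+ p. ennreal (lam * (fst p - fst p * indicator {p. snd p \<le> x} p)) \<partial>M)"
    using positive
  proof (intro nn_integral_mono_AE, eventually_elim)
    case (elim p)
    have "t < rho (snd p) \<Longrightarrow> \<not> snd p \<le> x" using rho_mono[of "snd p" x] x by auto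
    then show ?case using elim lam_pos by (auto simp: indicator_def intro!: ennreal_leI)
  qed
  also have "\<dots> = ennreal (\<integral>p. lam * (fst p - fst p * indicator {p. snd p \<le> x} p) \<partial>M)"
    using positive lam_pos
    by (intro nn_integral_eq_integral integrable_mult_right Bochner_Integration.integrable_diff
        integrable_size integrable_size_indicator) (auto elim!: eventually_mono simp: indicator_def)
  also have "(\<integral>p. lam * (fst p - fst p * indicator {p. snd p \<le> x} p) \<partial>M) = lam * ES - t"
    using x by (simp add: integrable_size integrable_size_indicator mean_size rhoZ_def algebra_simps)
  finally show ?thesis .
qed

lemma slowdown_ge_1: "1 \<le> 1 / (1 - rho x)"
  using rho_nonneg[of x] rho_le_load[of x] load_lt_1 by (simp add: field_simps)

lemma slowdown_mono: "mono (\<lambda>x. 1 / (1 - rho x))"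
proof (rule monoI)
  fix x y :: real assume "x \<le> y"
  then show "1 / (1 - rho x) \<le> 1 / (1 - rho y)"
    using rho_mono[of x y] rho_le_load[of y] load_lt_1 rho_nonneg[of x]
    by (intro divide_left_mono mult_pos_pos) auto
qed

lemma nn_integral_weighted_level_le:
  "(\<integral>\<^sup>+ p. ennreal (indicator {0..<rho (snd p)} t * (lam * fst p / (1 - t)\<^sup>2)) \<partial>M)
    \<le> ennreal (indicator {0..<lam * ES} t * ((lam * ES - t) / (1 - t)\<^sup>2))"
proof (cases "0 \<le> t \<and> t < lam * ES")
  case True
  have "(\<integral>\<^sup>+ p. ennreal (indicator {0..<rho (snd p)} t * (lam * fst p / (1 - t)\<^sup>2)) \<partial>M)
      = (\<integral>\<^sup>+ p. ennreal (lam * fst p * indicator {p. t < rho (snd p)} p) * ennreal (1 / (1 - t)\<^sup>2) \<partial>M)"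
    using True by (intro nn_integral_cong) (simp add: ennreal_mult''[symmetric] indicator_def)
  also have "\<dots> = (\<integral>\<^sup>+ p. ennreal (lam * fst p * indicator {p. t < rho (snd p)} p) \<partial>M)
      * ennreal (1 / (1 - t)\<^sup>2)"
    by (rule nn_integral_multc) measurable
  also have "\<dots> \<le> ennreal (lam * ES - t) * ennreal (1 / (1 - t)\<^sup>2)"
    using load_above_level[of t] True by (intro mult_right_mono) auto
  also have "\<dots> = ennreal (indicator {0..<lam * ES} t * ((lam * ES - t) / (1 - t)\<^sup>2))"
    using True by (simp add: ennreal_mult[symmetric])
  finally show ?thesis .
next
  case False
  then have "indicator {0..<rho (snd p)} t * (lam * fst p / (1 - t)\<^sup>2) = 0" for p
    using rho_le_load[of "snd p"] by auto
  then show ?thesis by (simp only: ennreal_0 nn_integral_const mult_zero_left zero_le)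
qed

text \<open>Layer cake: 1 / (1 - rho) - 1 is the integral of (1 - t)^-2 over [0, rho).\<close>
lemma excess_slowdown_le:
  "(\<integral>\<^sup>+ p. ennreal (lam * fst p * (1 / (1 - rho (snd p)) - 1)) \<partial>M)
    \<le> ennreal (ln (1 / (1 - lam * ES)) - lam * ES)"
proof -
  define h where "h p t = ennreal (indicator {0..<rho (snd p)} t * (lam * fst p / (1 - t)\<^sup>2))"
    for p :: "real \<times> real" and t :: real
  interpret finite_measure M by (rule finite_M)
  interpret pair_sigma_finite M lborel
    by (intro pair_sigma_finite.intro sigma_finite_lborel) unfold_locales
  have [measurable]: "(\<lambda>x. fst (fst x)) \<in> borel_measurable (M \<Otimes>\<^sub>M lborel)"
    "(\<lambda>x. snd (fst x)) \<in> borel_measurable (M \<Otimes>\<^sub>M lborel)"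
    using measurable_compose[OF measurable_fst fst_measurable]
      measurable_compose[OF measurable_fst snd_measurable] by auto
  have h_measurable: "case_prod h \<in> borel_measurable (M \<Otimes>\<^sub>M lborel)"
    unfolding h_def case_prod_beta indicator_def atLeastLessThan_iff by measurable
  have "(\<integral>\<^sup>+ p. ennreal (lam * fst p * (1 / (1 - rho (snd p)) - 1)) \<partial>M)
      = (\<integral>\<^sup>+ p. (\<integral>\<^sup>+ t. h p t \<partial>lborel) \<partial>M)"
    using positive
  proof (intro nn_integral_cong_AE, eventually_elim)
    case (elim p)
    then show ?case unfolding h_def
      using rho_nonneg[of "snd p"] rho_le_load[of "snd p"] load_lt_1 lam_pos
      by (intro excess_eq_nn_integral) auto
  qed
  also have "\<dots> = (\<integral>\<^sup>+ t. (\<integral>\<^sup>+ p. h p t \<partial>M) \<partial>lborel)"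
    by (rule Fubini'[OF h_measurable, symmetric])
  also have "\<dots> \<le> (\<integral>\<^sup>+ t. ennreal (indicator {0..<lam * ES} t * ((lam * ES - t) / (1 - t)\<^sup>2)) \<partial>lborel)"
    unfolding h_def by (intro nn_integral_mono nn_integral_weighted_level_le)
  also have "\<dots> = ennreal (ln (1 / (1 - lam * ES)) - lam * ES)"
    using rho_nonneg[of 0] rho_le_load[of 0] load_lt_1 by (intro nn_integral_tail_weight) auto
  finally show ?thesis .
qed

lemma cond_res_time_SRPT_B_le:
  assumes "0 < s" "0 < z"
  shows "cond_res_time rank_SRPT_B lam M s z
    \<le> cond_res_time rank_SRPT_SE lam M s z
      + ennreal (min 1 (\<bar>s - z\<bar> / z) * (s * (1 / (1 - rho z) - 1)))"
  unfolding cond_res_time_eq_res_integral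
  using slowdown_mono slowdown_ge_1 assms by (rule res_integral_SRPT_B_le_SRPT_SE)

text \<open>The conditional residence times need not be measurable in (S, Z), which is why only
  the excess term is integrated separately.\<close>
lemma mean_res_time_SRPT_B_le:
  assumes c: "0 \<le> c" and coeff: "AE p in M. min 1 (\<bar>fst p - snd p\<bar> / snd p) \<le> c"
  shows "mean_res_time rank_SRPT_B lam M
    \<le> mean_res_time rank_SRPT_SE lam M + ennreal (c / lam * (ln (1 / (1 - lam * ES)) - lam * ES))"
proof -
  define R where "R x = 1 / (1 - rho x)" for x
  have R_measurable [measurable]: "R \<in> borel_measurable borel"
    unfolding R_def using slowdown_mono by (rule borel_measurable_mono)
  define excess where "excess p = ennreal (c / lam) * ennreal (lam * fst p * (R (snd p) - 1))" for p
  have per_job: "AE p in M. cond_res_time rank_SRPT_B lam M (fst p) (snd p)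
      \<le> cond_res_time rank_SRPT_SE lam M (fst p) (snd p) + excess p"
    using positive coeff
  proof eventually_elim
    case (elim p)
    have "min 1 (\<bar>fst p - snd p\<bar> / snd p) * (fst p * (R (snd p) - 1)) \<le> c * (fst p * (R (snd p) - 1))"
      using elim slowdown_ge_1[of "snd p"] by (intro mult_right_mono) (auto simp: R_def)
    also have "\<dots> = c / lam * (lam * fst p * (R (snd p) - 1))" using lam_pos by simp
    finally have "ennreal (min 1 (\<bar>fst p - snd p\<bar> / snd p) * (fst p * (R (snd p) - 1))) \<le> excess p"
      unfolding excess_def using c lam_pos by (simp add: ennreal_mult'[symmetric] ennreal_leI)
    then show ?case
      using cond_res_time_SRPT_B_le[of "fst p" "snd p"] elim unfolding R_def
      by (meson add_left_mono order_trans)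
  qed
  have "mean_res_time rank_SRPT_B lam M
      \<le> (\<integral>\<^sup>+ p. cond_res_time rank_SRPT_SE lam M (fst p) (snd p) + excess p \<partial>M)"
    unfolding mean_res_time_def by (rule nn_integral_mono_AE[OF per_job])
  also have "\<dots> \<le> mean_res_time rank_SRPT_SE lam M + (\<integral>\<^sup>+ p. excess p \<partial>M)"
    unfolding mean_res_time_def excess_def by (intro nn_integral_add_le) measurable
  also have "(\<integral>\<^sup>+ p. excess p \<partial>M)
      = ennreal (c / lam) * (\<integral>\<^sup>+ p. ennreal (lam * fst p * (R (snd p) - 1)) \<partial>M)"
    unfolding excess_def by (rule nn_integral_cmult) measurable
  also have "\<dots> \<le> ennreal (c / lam) * ennreal (ln (1 / (1 - lam * ES)) - lam * ES)"
    unfolding R_def by (intro mult_left_mono excess_slowdown_le) simp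
  also have "\<dots> = ennreal (c / lam * (ln (1 / (1 - lam * ES)) - lam * ES))"
    by (rule ennreal_mult'[symmetric]) (use c lam_pos in simp)
  finally show ?thesis by (simp add: add_left_mono)
qed

end

lemma job_law_density:
  fixes f :: "real \<times> real \<Rightarrow> real"
  assumes dens: "M = density lborel (\<lambda>p. ennreal (f p))" and f_meas: "f \<in> borel_measurable borel"
    and f_prob: "(\<integral>\<^sup>+ p. ennreal (f p) \<partial>lborel) = 1"
    and ES: "(\<integral>\<^sup>+ p. ennreal (fst p) \<partial>M) = ennreal ES" and ES_pos: "0 < ES"
    and positive: "AE p in M. 0 < fst p \<and> 0 < snd p"
    and "0 < lam" "lam * ES < 1"
  shows "job_law M lam ES"
proof (rule job_law.intro)
  show sets_M: "sets M = sets (borel :: (real \<times> real) measure)" by (simp add: dens)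
  show "finite_measure M"
  proof (rule finite_measureI)
    have "emeasure M (space M) = (\<integral>\<^sup>+ p. ennreal (f p) \<partial>lborel)"
      unfolding dens using f_meas by (simp add: emeasure_density)
    then show "emeasure M (space M) \<noteq> \<infinity>" using f_prob by simp
  qed
  have [measurable]: "fst \<in> borel_measurable M"
    unfolding measurable_cong_sets[OF sets_M refl]
    by (intro borel_measurable_continuous_onI continuous_on_fst continuous_on_id)
  have size_nonneg: "AE p in M. 0 \<le> fst p" using positive by eventually_elim auto
  show integrable: "integrable M fst"
    by (rule integrableI_nonneg) (use size_nonneg ES in auto)
  have "ennreal (integral\<^sup>L M fst) = ennreal ES"
    using nn_integral_eq_integral[OF integrable size_nonneg] ES by simp
  then show "integral\<^sup>L M fst = ES"
    using integral_nonneg_AE[OF size_nonneg] ES_pos by simp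
  show "AE p in M. snd p \<noteq> x" for x
    unfolding dens using f_meas by (intro density_AE_snd_neq) simp
qed (use assms in auto)

theorem mainTheorem7:
  fixes lam \<alpha> \<beta> ES :: real and f :: "real \<times> real \<Rightarrow> real" and M :: "(real \<times> real) measure"
  assumes dens: "M = density lborel (\<lambda>p. ennreal (f p))"
    and f_meas: "f \<in> borel_measurable borel"
    and f_nonneg: "\<And>p. 0 \<le> f p"
    and f_prob: "(\<integral>\<^sup>+ p. ennreal (f p) \<partial>lborel) = 1"
    and lam_pos: "0 < lam"
    and ES: "(\<integral>\<^sup>+ p. ennreal (fst p) \<partial>M) = ennreal ES"
    and rho_pos: "0 < lam * ES" and rho_lt1: "lam * ES < 1"
    and \<beta>_pos: "0 < \<beta>" and \<beta>\<alpha>: "\<beta> \<le> \<alpha>"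
    and bounded: "AE p in M. 0 < fst p \<and> \<beta> * fst p \<le> snd p \<and> snd p \<le> \<alpha> * fst p"
  shows "mean_res_time rank_SRPT_B lam M
           \<le> mean_res_time rank_SRPT_SE lam M
             + ennreal (min 1 (max (1 - 1 / \<alpha>) (1 / \<beta> - 1))
                 * (1 / (lam * ES) * ln (1 / (1 - lam * ES)) - 1) * ES)"
proof -
  have ES_pos: "0 < ES" using rho_pos lam_pos by (simp add: zero_less_mult_iff)
  have positive: "AE p in M. 0 < fst p \<and> 0 < snd p"
    using bounded by eventually_elim (use \<beta>_pos in \<open>auto intro: less_le_trans[OF mult_pos_pos]\<close>)
  interpret job_law M lam ES
    by (rule job_law_density[OF dens f_meas f_prob ES ES_pos positive lam_pos rho_lt1])
  define c where "c = min 1 (max (1 - 1 / \<alpha>) (1 / \<beta> - 1))"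
  have "AE p in M. min 1 (\<bar>fst p - snd p\<bar> / snd p) \<le> c"
    using bounded by eventually_elim (use estimate_error_le_bound[OF \<beta>_pos] in \<open>auto simp: c_def\<close>)
  moreover have "c / lam * (ln (1 / (1 - lam * ES)) - lam * ES)
      = c * (1 / (lam * ES) * ln (1 / (1 - lam * ES)) - 1) * ES"
    using lam_pos ES_pos by (simp add: field_simps)
  ultimately show ?thesis
    using mean_res_time_SRPT_B_le[of c] estimate_error_bound_nonneg[OF \<beta>_pos \<beta>\<alpha>]
    by (simp add: c_def)
qed

end
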